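(* Fix any $\gamma\in[0,1]$ and any $x\in X$. For any distribution $P$ over $\Pi$ and any $\pi\in\Pi$, if $m=\lceil 6/(\gamma^2\mu_t)\rceil$, then \[\mathbb{E}_{\widetilde P\sim P^m}\Bigl|\frac1{(1-K\mu_t)W_{\widetilde P}(x,\pi(x))+\mu_t}-\frac1{(1-K\mu_t)W_P(x,\pi(x))+\mu_t}\Bigr|\le\frac{\gamma}{(1-K\mu_t)W_P(x,\pi(x))+\mu_t}.\] This implies that for all distributions $P$ over $\Pi$ and any $\pi\in\Pi$ there exists $\widetilde P\in\mathcal S_m$ such that for any $\lambda>0$, \[(V_{P,\pi,t}-V_{\widetilde P,\pi,t})+(1+\lambda)(\widehat V_{\widetilde P,\pi,t}-\widehat V_{P,\pi,t})\le\gamma\bigl(V_{P,\pi,t}+(1+\lambda)\widehat V_{P,\pi,t}\bigr).\]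
   Context: $A$ is a set of $K$ actions, $X$ a set of contexts, $\Pi$ a finite set of $N$ policies $\pi:X\to A$, $D_X$ a distribution on $X$, $\delta\in(0,1)$, and $x_1,\dots,x_{t-1}\in X$ a fixed sample. $C_t=2\log(Nt/\delta)$, $\mu_t=\min\{\frac1{2K},\sqrt{C_t/(2Kt)}\}$. For a distribution $P$ over $\Pi$, $W_P(x,a)=\sum_{\pi:\pi(x)=a}P(\pi)$; $V_{P,\pi,t}=\mathbb{E}_{x\sim D_X}[1/((1-K\mu_t)W_P(x,\pi(x))+\mu_t)]$ and $\widehat V_{P,\pi,t}=\frac1{t-1}\sum_{i=1}^{t-1}1/((1-K\mu_t)W_P(x_i,\pi(x_i))+\mu_t)$. $\mathcal S_m$ is the set of distributions of the form $\frac1m\sum_{i=1}^m\mathbb{I}(\pi=\pi_i)$ with $\pi_i\in\Pi$; $\widetilde P\sim P^m$ means $\widetilde P=\frac1m\sum_{i=1}^m\mathbb{I}(\cdot=\pi_i)$ with $\pi_1,\dots,\pi_m$ drawn i.i.d. from $P$. *)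

theory Defs
  imports "HOL-Probability.Probability"
begin

text \<open>Distributions over the finite policy set Pol are weight functions
  on policies (values outside Pol are ignored).\<close>
definition is_dist :: "('x \<Rightarrow> 'a) set \<Rightarrow> (('x \<Rightarrow> 'a) \<Rightarrow> real) \<Rightarrow> bool" where
  "is_dist Pol P \<longleftrightarrow> (\<forall>\<pi>\<in>Pol. 0 \<le> P \<pi>) \<and> sum P Pol = 1"

definition C_t :: "nat \<Rightarrow> real \<Rightarrow> nat \<Rightarrow> real" where
  "C_t N \<delta> t = 2 * ln (real N * real t / \<delta>)"

definition mu_t :: "nat \<Rightarrow> nat \<Rightarrow> real \<Rightarrow> nat \<Rightarrow> real" where
  "mu_t K N \<delta> t = min (1 / (2 * real K)) (sqrt (C_t N \<delta> t / (2 * real K * real t)))"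

definition W :: "('x \<Rightarrow> 'a) set \<Rightarrow> (('x \<Rightarrow> 'a) \<Rightarrow> real) \<Rightarrow> 'x \<Rightarrow> 'a \<Rightarrow> real" where
  "W Pol P x a = (\<Sum>\<pi>\<in>{\<pi>\<in>Pol. \<pi> x = a}. P \<pi>)"

definition inv_prob :: "('x \<Rightarrow> 'a) set \<Rightarrow> nat \<Rightarrow> real \<Rightarrow> (('x \<Rightarrow> 'a) \<Rightarrow> real) \<Rightarrow> ('x \<Rightarrow> 'a) \<Rightarrow> 'x \<Rightarrow> real" where
  "inv_prob Pol K \<mu> P \<pi> x = 1 / ((1 - real K * \<mu>) * W Pol P x (\<pi> x) + \<mu>)"

definition V :: "'x measure \<Rightarrow> ('x \<Rightarrow> 'a) set \<Rightarrow> nat \<Rightarrow> real \<Rightarrow> (('x \<Rightarrow> 'a) \<Rightarrow> real) \<Rightarrow> ('x \<Rightarrow> 'a) \<Rightarrow> real" where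
  "V D Pol K \<mu> P \<pi> = (\<integral>x. inv_prob Pol K \<mu> P \<pi> x \<partial>D)"

definition Vhat :: "(nat \<Rightarrow> 'x) \<Rightarrow> nat \<Rightarrow> ('x \<Rightarrow> 'a) set \<Rightarrow> nat \<Rightarrow> real \<Rightarrow> (('x \<Rightarrow> 'a) \<Rightarrow> real) \<Rightarrow> ('x \<Rightarrow> 'a) \<Rightarrow> real" where
  "Vhat xs t Pol K \<mu> P \<pi> = (1 / real (t - 1)) * (\<Sum>i\<in>{1..<t}. inv_prob Pol K \<mu> P \<pi> (xs i))"

definition emp :: "nat \<Rightarrow> (nat \<Rightarrow> ('x \<Rightarrow> 'a)) \<Rightarrow> ('x \<Rightarrow> 'a) \<Rightarrow> real" where
  "emp m f = (\<lambda>\<pi>. real (card {i\<in>{..<m}. f i = \<pi>}) / real m)"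

definition S :: "('x \<Rightarrow> 'a) set \<Rightarrow> nat \<Rightarrow> (('x \<Rightarrow> 'a) \<Rightarrow> real) set" where
  "S Pol m = {emp m f | f. f \<in> {..<m} \<rightarrow>\<^sub>E Pol}"

text \<open>Expectation over Ptilde ~ P^m of g(Ptilde): pi_1..pi_m iid from P\<close>
definition E_Pm :: "('x \<Rightarrow> 'a) set \<Rightarrow> (('x \<Rightarrow> 'a) \<Rightarrow> real) \<Rightarrow> nat \<Rightarrow> ((('x \<Rightarrow> 'a) \<Rightarrow> real) \<Rightarrow> real) \<Rightarrow> real" where
  "E_Pm Pol P m g = (\<Sum>f\<in>{..<m} \<rightarrow>\<^sub>E Pol. (\<Prod>i<m. P (f i)) * g (emp m f))"

end

theory Submission
  imports Defs
begin

text \<open>Under \<open>Q \<sim> P\<^sup>m\<close> the weight \<open>W Pol Q x (\<pi> x)\<close> is the empirical mean of \<open>m\<close> independent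
  indicators of mean \<open>w = W Pol P x (\<pi> x)\<close>, so its variance is \<open>(w - w\<^sup>2) / m\<close>. Writing the two
  denominators as \<open>a = (1 - K \<mu>) w + \<mu>\<close> and \<open>b\<close>, the deviation \<open>\<bar>1/b - 1/a\<bar>\<close> is at most a
  linear plus a quadratic term in \<open>a - b\<close>; AM-GM trades the linear term for \<open>\<gamma> / (4 a)\<close> plus another quadratic one, and
  \<open>m \<ge> 6 / (\<gamma>\<^sup>2 \<mu>)\<close> makes the expected quadratic part at most \<open>\<gamma> / (4 a)\<close>. This proves the
  first claim even with \<open>\<gamma> / 2\<close>. Averaged over \<open>D\<close> and over the sample, the expected
  deviations of \<open>V\<close> and \<open>Vhat\<close> are then at most \<open>\<gamma> / 2\<close> times their values at \<open>P\<close>. By Markov's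
  inequality each exceeds twice its mean with probability below \<open>1/2\<close>, so some empirical
  distribution in \<open>S Pol m\<close> violates neither bound.\<close>

lemma sum_PiE_prod_weights:
  fixes P :: "'b \<Rightarrow> real" and m :: nat
  assumes "finite A" "sum P A = 1"
  shows "(\<Sum>f\<in>{..<m} \<rightarrow>\<^sub>E A. \<Prod>i<m. P (f i)) = 1"
  using prod_sum_PiE[of "{..<m}" "\<lambda>_. A" "\<lambda>_. P"] assms by simp

lemma sum_PiE_prod_weights_two_coords:
  fixes P h h' :: "'b \<Rightarrow> real" and i j m :: nat
  assumes "finite A" "sum P A = 1" "i < m" "j < m"
  shows "(\<Sum>f\<in>{..<m} \<rightarrow>\<^sub>E A. (\<Prod>k<m. P (f k)) * (h (f i) * h' (f j)))
     = (if i = j then (\<Sum>y\<in>A. P y * (h y * h' y)) else (\<Sum>y\<in>A. P y * h y) * (\<Sum>y\<in>A. P y * h' y))"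
proof -
  define G where "G k y = P y * (if k = i then h y else 1) * (if k = j then h' y else 1)" for k y
  have "(\<Prod>k<m. P (f k)) * (h (f i) * h' (f j)) = (\<Prod>k<m. G k (f k))" for f
    using assms(3,4) prod.delta[of "{..<m}" i "\<lambda>k. h (f k)"] prod.delta[of "{..<m}" j "\<lambda>k. h' (f k)"]
    by (simp add: G_def prod.distrib)
  then have "(\<Sum>f\<in>{..<m} \<rightarrow>\<^sub>E A. (\<Prod>k<m. P (f k)) * (h (f i) * h' (f j))) = (\<Prod>k<m. \<Sum>y\<in>A. G k y)"
    using prod_sum_PiE[of "{..<m}" "\<lambda>_. A" G] assms(1) by simp
  also have "\<dots> = (\<Prod>k<m. (if k = i then \<Sum>y\<in>A. P y * (if i = j then h y * h' y else h y) else 1)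
                          * (if k = j \<and> i \<noteq> j then \<Sum>y\<in>A. P y * h' y else 1))"
    unfolding G_def by (intro prod.cong refl) (cases "i = j"; auto simp: assms(2) mult.assoc)
  also have "\<dots> = (if i = j then (\<Sum>y\<in>A. P y * (h y * h' y)) else (\<Sum>y\<in>A. P y * h y) * (\<Sum>y\<in>A. P y * h' y))"
    using assms(3,4) by (simp add: prod.distrib prod.delta)
  finally show ?thesis .
qed

lemma sum_PiE_prod_weights_sample_mean_variance:
  fixes P Y :: "'b \<Rightarrow> real" and m :: nat
  assumes "finite A" "sum P A = 1" "m > 0"
  defines "w \<equiv> \<Sum>y\<in>A. P y * Y y"
  shows "(\<Sum>f\<in>{..<m} \<rightarrow>\<^sub>E A. (\<Prod>k<m. P (f k)) * ((\<Sum>i<m. Y (f i)) / m - w)\<^sup>2)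
       = ((\<Sum>y\<in>A. P y * (Y y)\<^sup>2) - w\<^sup>2) / m"
proof -
  define Z where "Z y = Y y - w" for y
  have sq: "((\<Sum>i<m. Y (f i)) / m - w)\<^sup>2 = (\<Sum>i<m. \<Sum>j<m. Z (f i) * Z (f j)) / (real m)\<^sup>2" for f
  proof -
    have "(\<Sum>i<m. Y (f i)) / m - w = (\<Sum>i<m. Z (f i)) / m"
      using assms(3) by (simp add: Z_def sum_subtractf field_simps)
    then show ?thesis by (simp add: power2_eq_square sum_product power_divide)
  qed
  have mean_Z: "(\<Sum>y\<in>A. P y * Z y) = 0"
    by (simp add: Z_def right_diff_distrib sum_subtractf w_def flip: sum_distrib_right) (simp add: assms(2))
  have var_Z: "(\<Sum>y\<in>A. P y * (Z y * Z y)) = (\<Sum>y\<in>A. P y * (Y y)\<^sup>2) - w\<^sup>2"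
  proof -
    have "(\<Sum>y\<in>A. P y * (Z y * Z y)) = (\<Sum>y\<in>A. P y * (Y y)\<^sup>2 - 2 * w * (P y * Y y) + w\<^sup>2 * P y)"
      by (rule sum.cong) (auto simp: Z_def algebra_simps power2_eq_square)
    also have "\<dots> = (\<Sum>y\<in>A. P y * (Y y)\<^sup>2) - 2 * w * w + w\<^sup>2"
      by (simp add: sum.distrib sum_subtractf w_def flip: sum_distrib_left) (simp add: assms(2))
    finally show ?thesis by (simp add: power2_eq_square)
  qed
  have "(\<Sum>f\<in>{..<m} \<rightarrow>\<^sub>E A. (\<Prod>k<m. P (f k)) * ((\<Sum>i<m. Y (f i)) / m - w)\<^sup>2)
      = (\<Sum>i<m. \<Sum>j<m. \<Sum>f\<in>{..<m} \<rightarrow>\<^sub>E A. (\<Prod>k<m. P (f k)) * (Z (f i) * Z (f j))) / (real m)\<^sup>2"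
    unfolding sq by (simp add: sum_divide_distrib sum_distrib_left sum.swap[of _ "{..<m} \<rightarrow>\<^sub>E A"] mult.assoc)
  also have "\<dots> = (\<Sum>i<m. \<Sum>j<m. if i = j then (\<Sum>y\<in>A. P y * (Y y)\<^sup>2) - w\<^sup>2 else 0) / (real m)\<^sup>2"
    by (intro arg_cong[where f="\<lambda>x. x / _"] sum.cong refl)
      (simp add: sum_PiE_prod_weights_two_coords[OF assms(1,2)] mean_Z var_Z)
  also have "\<dots> = ((\<Sum>y\<in>A. P y * (Y y)\<^sup>2) - w\<^sup>2) / m"
    using assms(3) by (simp add: power2_eq_square)
  finally show ?thesis .
qed

lemma abs_inverse_diff_le:
  fixes a b \<mu> :: real
  assumes "a > 0" "\<mu> > 0" "\<mu> \<le> b"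
  shows "\<bar>1/b - 1/a\<bar> \<le> \<bar>a - b\<bar> / a\<^sup>2 + (a - b)\<^sup>2 / (a\<^sup>2 * \<mu>)"
proof -
  have "1/b - 1/a = (a - b) / a\<^sup>2 + (a - b)\<^sup>2 / (a\<^sup>2 * b)"
    using assms by (simp add: field_simps power2_eq_square)
  then have "\<bar>1/b - 1/a\<bar> \<le> \<bar>a - b\<bar> / a\<^sup>2 + (a - b)\<^sup>2 / (a\<^sup>2 * b)"
    using abs_triangle_ineq[of "(a - b) / a\<^sup>2" "(a - b)\<^sup>2 / (a\<^sup>2 * b)"] assms
    by (simp add: abs_divide)
  also have "\<dots> \<le> \<bar>a - b\<bar> / a\<^sup>2 + (a - b)\<^sup>2 / (a\<^sup>2 * \<mu>)"
    using assms by (intro add_left_mono divide_left_mono mult_left_mono) auto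
  finally show ?thesis .
qed

lemma abs_inverse_diff_le_quadratic:
  fixes a b \<mu> \<gamma> :: real
  assumes "a > 0" "\<mu> > 0" "\<mu> \<le> b" "\<gamma> > 0"
  shows "\<bar>1/b - 1/a\<bar> \<le> \<gamma> / (4 * a) + (1 / (\<gamma> * a^3) + 1 / (a\<^sup>2 * \<mu>)) * (a - b)\<^sup>2"
proof -
  define u where "u = \<bar>a - b\<bar> / a"
  have "\<gamma> * u \<le> \<gamma>\<^sup>2 / 4 + u\<^sup>2"
    using zero_le_power2[of "u - \<gamma> / 2"] by (simp add: power2_eq_square algebra_simps)
  then have "u / a \<le> \<gamma> / (4 * a) + u\<^sup>2 / (\<gamma> * a)"
    using assms by (simp add: field_simps power2_eq_square)
  then have "\<bar>a - b\<bar> / a\<^sup>2 \<le> \<gamma> / (4 * a) + (a - b)\<^sup>2 / (\<gamma> * a^3)"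
    by (simp add: u_def power2_eq_square power3_eq_cube power_divide mult_ac)
  then show ?thesis
    using abs_inverse_diff_le[OF assms(1-3)] by (simp add: algebra_simps)
qed

lemma deviation_coefficient_le:
  fixes c \<mu> w \<gamma> m :: real
  assumes "0 \<le> c" "c \<le> 1" "\<mu> > 0" "w \<ge> 0" "\<gamma> > 0" "\<gamma> \<le> 1" "m \<ge> 6 / (\<gamma>\<^sup>2 * \<mu>)"
  defines "a \<equiv> c * w + \<mu>"
  shows "(1 / (\<gamma> * a^3) + 1 / (a\<^sup>2 * \<mu>)) * (c\<^sup>2 * (w / m)) \<le> \<gamma> / (4 * a)"
proof -
  have a: "a > 0" "c * w \<le> a" using assms by (simp_all add: a_def add_nonneg_pos)
  have "6 / (\<gamma>\<^sup>2 * \<mu>) > 0" using assms by simp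
  then have "m > 0" using assms(7) by linarith
  then have "1 / m \<le> \<gamma>\<^sup>2 * \<mu> / 6"
    using assms(3,5,7) by (simp add: field_simps mult_ac)
  then have "w / m \<le> w * (\<gamma>\<^sup>2 * \<mu> / 6)"
    using mult_left_mono[OF _ assms(4)] by (metis times_divide_eq_right mult.right_neutral)
  then have "(1 / (\<gamma> * a^3) + 1 / (a\<^sup>2 * \<mu>)) * (c\<^sup>2 * (w / m))
      \<le> (1 / (\<gamma> * a^3) + 1 / (a\<^sup>2 * \<mu>)) * (c\<^sup>2 * (w * (\<gamma>\<^sup>2 * \<mu> / 6)))"
    using assms a by (intro mult_left_mono) auto
  also have "\<dots> = \<gamma> / (6 * a) * (c * (c * w * \<mu> / a\<^sup>2) + (c * w / a) * (c * \<gamma>))"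
    using a(1) assms(3,5) by (simp add: field_simps power2_eq_square power3_eq_cube)
  also have "\<dots> \<le> \<gamma> / (6 * a) * (1 * (1 / 4) + 1 * 1)"
  proof -
    have "4 * (c * w) * \<mu> \<le> a\<^sup>2"
      using zero_le_power2[of "c * w - \<mu>"] by (simp add: a_def power2_eq_square algebra_simps)
    then have "c * w * \<mu> / a\<^sup>2 \<le> 1 / 4" using a by (simp add: field_simps)
    moreover have "c * w / a \<le> 1" "c * \<gamma> \<le> 1"
      using a assms by (simp_all add: mult_le_one)
    ultimately show ?thesis
      using a assms by (intro mult_left_mono add_mono mult_mono) auto
  qed
  also have "\<dots> \<le> \<gamma> / (4 * a)" using a assms by (simp add: field_simps)
  finally show ?thesis .
qed

lemma weight_above_twice_weighted_mean_lt_half: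
  fixes p X :: "'b \<Rightarrow> real"
  assumes "finite B" "\<forall>f\<in>B. 0 \<le> p f" "\<forall>f\<in>B. 0 \<le> X f"
  defines "e \<equiv> \<Sum>f\<in>B. p f * X f"
  shows "(\<Sum>f\<in>{f\<in>B. 2 * e < X f}. p f) < 1 / 2"
proof (rule ccontr)
  define S where "S = {f\<in>B. 2 * e < X f}"
  assume "\<not> ?thesis"
  then have half: "1 / 2 \<le> sum p S" by (simp add: S_def)
  then have "\<not> (\<forall>f\<in>S. p f \<le> 0)" using sum_nonpos[of S p] by fastforce
  then obtain g where g: "g \<in> S" "p g > 0" by (auto simp: not_le)
  have "2 * e * sum p S < (\<Sum>f\<in>S. p f * X f)"
    unfolding sum_distrib_left
  proof (rule sum_strict_mono_ex1)
    show "finite S" using assms(1) by (simp add: S_def)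
    show "\<forall>f\<in>S. 2 * e * p f \<le> p f * X f"
      using assms(2) by (auto simp: S_def mult.commute[of "p _"] intro: mult_right_mono)
    show "\<exists>f\<in>S. 2 * e * p f < p f * X f"
      using g by (auto simp: S_def mult.commute intro!: bexI[of _ g])
  qed
  also have "\<dots> \<le> e"
    unfolding e_def S_def using assms by (intro sum_mono2) auto
  finally have "2 * e * sum p S < e" .
  moreover have "e * 1 \<le> e * (2 * sum p S)"
    using half assms(2,3) by (intro mult_left_mono) (auto simp: e_def intro: sum_nonneg)
  ultimately show False by (simp add: mult_ac)
qed

lemma ex_le_twice_weighted_means:
  fixes p X Y :: "'b \<Rightarrow> real"
  assumes "finite B" "\<forall>f\<in>B. 0 \<le> p f" "sum p B = 1" "\<forall>f\<in>B. 0 \<le> X f" "\<forall>f\<in>B. 0 \<le> Y f"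
  shows "\<exists>f\<in>B. X f \<le> 2 * (\<Sum>g\<in>B. p g * X g) \<and> Y f \<le> 2 * (\<Sum>g\<in>B. p g * Y g)"
proof (rule ccontr)
  define BX where "BX = {f\<in>B. 2 * (\<Sum>g\<in>B. p g * X g) < X f}"
  define BY where "BY = {f\<in>B. 2 * (\<Sum>g\<in>B. p g * Y g) < Y f}"
  assume "\<not> ?thesis"
  then have "B = BX \<union> BY" by (auto simp: BX_def BY_def not_le)
  then have "sum p B \<le> sum p BX + sum p BY"
    using assms(1,2) sum_Un[of BX BY p] sum_nonneg[of "BX \<inter> BY" p]
    by (simp add: BX_def BY_def)
  also have "\<dots> < 1 / 2 + 1 / 2"
    using weight_above_twice_weighted_mean_lt_half[OF assms(1,2)] assms(4,5)
    unfolding BX_def BY_def by (intro add_strict_mono) blast+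
  finally show False using assms(3) by simp
qed

lemma is_dist_finite: "is_dist Pol P \<Longrightarrow> finite Pol"
  unfolding is_dist_def by (metis sum.infinite zero_neq_one)

lemma W_eq_sum_indicator:
  "finite Pol \<Longrightarrow> W Pol P x a = (\<Sum>\<pi>\<in>Pol. P \<pi> * (if \<pi> x = a then 1 else 0))"
  unfolding W_def by (auto simp: sum.inter_filter intro!: sum.cong)

lemma W_nonneg: "\<forall>\<pi>\<in>Pol. 0 \<le> Q \<pi> \<Longrightarrow> 0 \<le> W Pol Q x a"
  unfolding W_def by (intro sum_nonneg) auto

lemma W_emp:
  assumes "finite Pol" "f \<in> {..<m} \<rightarrow>\<^sub>E Pol"
  shows "W Pol (emp m f) x a = (\<Sum>i<m. if f i x = a then 1 else 0) / real m"
proof -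
  have "W Pol (emp m f) x a = (\<Sum>\<pi>\<in>{\<pi>\<in>Pol. \<pi> x = a}. \<Sum>i<m. if f i = \<pi> then 1 else 0) / real m"
    unfolding W_def emp_def by (simp add: sum_divide_distrib flip: sum.inter_filter)
  also have "\<dots> = (\<Sum>i<m. \<Sum>\<pi>\<in>{\<pi>\<in>Pol. \<pi> x = a}. if f i = \<pi> then 1 else 0) / real m"
    by (subst sum.swap) (rule refl)
  also have "\<dots> = (\<Sum>i<m. if f i x = a then 1 else 0) / real m"
    using assms by (intro arg_cong[where f="\<lambda>s. s / _"] sum.cong refl) (auto simp: sum.delta PiE_def Pi_def)
  finally show ?thesis .
qed

lemma inv_prob_pos_le:
  assumes "\<forall>\<pi>'\<in>Pol. 0 \<le> Q \<pi>'" "0 \<le> 1 - real K * \<mu>" "\<mu> > 0"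
  shows "0 < inv_prob Pol K \<mu> Q \<pi> x" "inv_prob Pol K \<mu> Q \<pi> x \<le> 1 / \<mu>"
proof -
  have "\<mu> \<le> (1 - real K * \<mu>) * W Pol Q x (\<pi> x) + \<mu>"
    using assms(2) W_nonneg[OF assms(1)] by simp
  then show "0 < inv_prob Pol K \<mu> Q \<pi> x" "inv_prob Pol K \<mu> Q \<pi> x \<le> 1 / \<mu>"
    unfolding inv_prob_def using assms(3) by (auto intro: divide_left_mono)
qed

lemma integrable_inv_prob:
  fixes Pol :: "('x \<Rightarrow> 'a::finite) set" and D :: "'x measure"
  assumes "prob_space D" "finite Pol" "\<forall>\<pi>'\<in>Pol. \<pi>' \<in> D \<rightarrow>\<^sub>M count_space UNIV"
    "\<pi> \<in> Pol" "\<forall>\<pi>'\<in>Pol. 0 \<le> Q \<pi>'" "0 \<le> 1 - real K * \<mu>" "\<mu> > 0"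
  shows "integrable D (inv_prob Pol K \<mu> Q \<pi>)"
proof (rule finite_measure.integrable_const_bound[where B="1 / \<mu>"])
  show "finite_measure D" using assms(1) by (rule prob_space.finite_measure)
  show "AE x in D. norm (inv_prob Pol K \<mu> Q \<pi> x) \<le> 1 / \<mu>"
    using inv_prob_pos_le[OF assms(5-7)] by (simp add: less_imp_le)
  show "inv_prob Pol K \<mu> Q \<pi> \<in> borel_measurable D"
    unfolding inv_prob_def[abs_def] W_eq_sum_indicator[OF assms(2)] using assms(3,4)
    by (intro borel_measurable_divide borel_measurable_add borel_measurable_times borel_measurable_sum
        borel_measurable_const) (measurable, auto)
qed

lemma emp_nonneg: "0 \<le> emp m f \<pi>"
  unfolding emp_def by simp

lemma S_nonneg: "Q \<in> S Pol m \<Longrightarrow> 0 \<le> Q \<pi>"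
  unfolding S_def using emp_nonneg by blast

lemma emp_in_S: "f \<in> {..<m} \<rightarrow>\<^sub>E Pol \<Longrightarrow> emp m f \<in> S Pol m"
  unfolding S_def by blast

lemma prod_weights_nonneg:
  "is_dist Pol P \<Longrightarrow> f \<in> {..<m} \<rightarrow>\<^sub>E Pol \<Longrightarrow> 0 \<le> (\<Prod>i<m. P (f i))"
  unfolding is_dist_def by (intro prod_nonneg) (auto simp: PiE_iff)

lemma E_Pm_mono:
  assumes "is_dist Pol P" "\<And>Q. Q \<in> S Pol m \<Longrightarrow> g Q \<le> h Q"
  shows "E_Pm Pol P m g \<le> E_Pm Pol P m h"
  unfolding E_Pm_def
  by (intro sum_mono mult_left_mono assms(2) emp_in_S prod_weights_nonneg[OF assms(1)])

lemma E_Pm_affine: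
  assumes "is_dist Pol P"
  shows "E_Pm Pol P m (\<lambda>Q. \<alpha> + \<beta> * g Q) = \<alpha> + \<beta> * E_Pm Pol P m g"
proof -
  have "(\<Sum>f\<in>{..<m} \<rightarrow>\<^sub>E Pol. \<Prod>i<m. P (f i)) = 1"
    using assms by (intro sum_PiE_prod_weights is_dist_finite) (auto simp: is_dist_def)
  then show ?thesis
    by (simp add: E_Pm_def algebra_simps sum.distrib flip: sum_distrib_left sum_distrib_right)
qed

lemma E_Pm_scaled_sum:
  "E_Pm Pol P m (\<lambda>Q. c * (\<Sum>i\<in>I. h Q i)) = c * (\<Sum>i\<in>I. E_Pm Pol P m (\<lambda>Q. h Q i))"
  unfolding E_Pm_def by (simp add: sum_distrib_left sum.swap[of _ "{..<m} \<rightarrow>\<^sub>E Pol"] mult_ac)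

lemma has_bochner_integral_E_Pm:
  assumes "\<And>Q. Q \<in> S Pol m \<Longrightarrow> integrable D (h Q)"
  shows "has_bochner_integral D (\<lambda>x. E_Pm Pol P m (\<lambda>Q. h Q x)) (E_Pm Pol P m (\<lambda>Q. \<integral>x. h Q x \<partial>D))"
  unfolding E_Pm_def using assms
  by (intro has_bochner_integral_sum has_bochner_integral_mult_right has_bochner_integral_integrable)
    (auto simp: S_def)

lemma E_Pm_W_variance:
  assumes "is_dist Pol P" "m > 0"
  shows "E_Pm Pol P m (\<lambda>Q. (W Pol Q x a - W Pol P x a)\<^sup>2) = (W Pol P x a - (W Pol P x a)\<^sup>2) / m"
proof -
  define Y where "Y \<pi> = (if \<pi> x = a then 1 else 0 :: real)" for \<pi> :: "'a \<Rightarrow> 'b"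
  have fin: "finite Pol" and sum_P: "sum P Pol = 1"
    using assms(1) is_dist_finite unfolding is_dist_def by auto
  have W_P: "W Pol P x a = (\<Sum>\<pi>\<in>Pol. P \<pi> * Y \<pi>)"
    unfolding Y_def by (rule W_eq_sum_indicator[OF fin])
  have "E_Pm Pol P m (\<lambda>Q. (W Pol Q x a - W Pol P x a)\<^sup>2)
      = (\<Sum>f\<in>{..<m} \<rightarrow>\<^sub>E Pol. (\<Prod>i<m. P (f i)) * ((\<Sum>i<m. Y (f i)) / m - (\<Sum>\<pi>\<in>Pol. P \<pi> * Y \<pi>))\<^sup>2)"
    unfolding E_Pm_def W_P by (intro sum.cong refl) (simp add: W_emp[OF fin] Y_def)
  also have "\<dots> = ((\<Sum>\<pi>\<in>Pol. P \<pi> * (Y \<pi>)\<^sup>2) - (\<Sum>\<pi>\<in>Pol. P \<pi> * Y \<pi>)\<^sup>2) / m"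
    by (rule sum_PiE_prod_weights_sample_mean_variance[OF fin sum_P assms(2)])
  also have "(\<Sum>\<pi>\<in>Pol. P \<pi> * (Y \<pi>)\<^sup>2) = (\<Sum>\<pi>\<in>Pol. P \<pi> * Y \<pi>)"
    by (intro sum.cong refl) (simp add: Y_def)
  finally show ?thesis unfolding W_P .
qed

lemma ex_in_S_le_twice_E_Pm:
  assumes "is_dist Pol P" "\<And>Q. Q \<in> S Pol m \<Longrightarrow> 0 \<le> X Q" "\<And>Q. Q \<in> S Pol m \<Longrightarrow> 0 \<le> Y Q"
  shows "\<exists>Q\<in>S Pol m. X Q \<le> 2 * E_Pm Pol P m X \<and> Y Q \<le> 2 * E_Pm Pol P m Y"
proof -
  have fin: "finite Pol" using is_dist_finite[OF assms(1)] .
  have "\<exists>f\<in>{..<m} \<rightarrow>\<^sub>E Pol. X (emp m f) \<le> 2 * E_Pm Pol P m X \<and> Y (emp m f) \<le> 2 * E_Pm Pol P m Y"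
    unfolding E_Pm_def
  proof (rule ex_le_twice_weighted_means)
    show "finite ({..<m} \<rightarrow>\<^sub>E Pol)" using fin by (simp add: finite_PiE)
    show "sum (\<lambda>f. \<Prod>i<m. P (f i)) ({..<m} \<rightarrow>\<^sub>E Pol) = 1"
      using assms(1) fin by (intro sum_PiE_prod_weights) (auto simp: is_dist_def)
  qed (use assms prod_weights_nonneg emp_in_S in blast)+
  then show ?thesis unfolding S_def by blast
qed

lemma E_Pm_inv_prob_deviation_le:
  assumes dist: "is_dist Pol P" and c: "0 \<le> 1 - real K * \<mu>" and \<mu>: "\<mu> > 0"
    and \<gamma>: "0 < \<gamma>" "\<gamma> \<le> 1" and m: "real m \<ge> 6 / (\<gamma>\<^sup>2 * \<mu>)"
  shows "E_Pm Pol P m (\<lambda>Q. \<bar>inv_prob Pol K \<mu> Q \<pi> x - inv_prob Pol K \<mu> P \<pi> x\<bar>)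
    \<le> \<gamma> / 2 * inv_prob Pol K \<mu> P \<pi> x"
proof -
  define c where "c = 1 - real K * \<mu>"
  define w where "w = W Pol P x (\<pi> x)"
  define a where "a = c * w + \<mu>"
  define C where "C = 1 / (\<gamma> * a^3) + 1 / (a\<^sup>2 * \<mu>)"
  have w: "0 \<le> w"
    using W_nonneg dist unfolding w_def is_dist_def by auto
  have a: "a > 0" using c \<mu> w by (simp add: a_def c_def add_nonneg_pos)
  have "0 < 6 / (\<gamma>\<^sup>2 * \<mu>)" using \<gamma> \<mu> by simp
  then have m_pos: "m > 0" using m by linarith
  have inv_P: "inv_prob Pol K \<mu> P \<pi> x = 1 / a"
    unfolding inv_prob_def a_def c_def w_def ..
  have pointwise: "\<bar>inv_prob Pol K \<mu> Q \<pi> x - inv_prob Pol K \<mu> P \<pi> x\<bar>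
      \<le> \<gamma> / (4 * a) + C * c\<^sup>2 * (W Pol Q x (\<pi> x) - w)\<^sup>2" if "Q \<in> S Pol m" for Q
  proof -
    define b where "b = c * W Pol Q x (\<pi> x) + \<mu>"
    have "\<mu> \<le> b"
      using c W_nonneg[of Pol Q] S_nonneg[OF that] by (simp add: b_def c_def)
    moreover have "(a - b)\<^sup>2 = c\<^sup>2 * (W Pol Q x (\<pi> x) - w)\<^sup>2"
      by (simp add: a_def b_def power2_eq_square algebra_simps)
    moreover have "inv_prob Pol K \<mu> Q \<pi> x = 1 / b"
      unfolding inv_prob_def b_def c_def ..
    ultimately show ?thesis
      using abs_inverse_diff_le_quadratic[OF a \<mu> _ \<gamma>(1), of b] by (simp add: inv_P C_def mult.assoc)
  qed
  have "E_Pm Pol P m (\<lambda>Q. \<bar>inv_prob Pol K \<mu> Q \<pi> x - inv_prob Pol K \<mu> P \<pi> x\<bar>)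
      \<le> E_Pm Pol P m (\<lambda>Q. \<gamma> / (4 * a) + C * c\<^sup>2 * (W Pol Q x (\<pi> x) - w)\<^sup>2)"
    by (rule E_Pm_mono[OF dist pointwise])
  also have "\<dots> = \<gamma> / (4 * a) + C * c\<^sup>2 * ((w - w\<^sup>2) / m)"
    using E_Pm_affine[OF dist, of m "\<gamma> / (4 * a)" "C * c\<^sup>2"] E_Pm_W_variance[OF dist m_pos, of x "\<pi> x"]
    by (simp add: w_def)
  also have "\<dots> \<le> \<gamma> / (4 * a) + C * c\<^sup>2 * (w / m)"
    using w m_pos a \<mu> \<gamma> by (intro add_left_mono mult_left_mono divide_right_mono) (auto simp: C_def)
  also have "\<dots> \<le> \<gamma> / (4 * a) + \<gamma> / (4 * a)"
    using deviation_coefficient_le[OF c _ \<mu> w \<gamma> m] \<mu> by (simp add: C_def a_def c_def mult.assoc)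
  finally show ?thesis by (simp add: inv_P)
qed

lemma ex_S_V_Vhat_deviation_le:
  fixes Pol :: "('x \<Rightarrow> 'a::finite) set"
  assumes D: "prob_space D" and meas: "\<forall>\<pi>'\<in>Pol. \<pi>' \<in> D \<rightarrow>\<^sub>M count_space UNIV"
    and \<pi>: "\<pi> \<in> Pol" and dist: "is_dist Pol P" and c: "0 \<le> 1 - real K * \<mu>" and \<mu>: "\<mu> > 0"
    and deviation: "\<And>x. E_Pm Pol P m (\<lambda>Q. \<bar>inv_prob Pol K \<mu> Q \<pi> x - inv_prob Pol K \<mu> P \<pi> x\<bar>)
      \<le> \<gamma> / 2 * inv_prob Pol K \<mu> P \<pi> x"
  shows "\<exists>Q\<in>S Pol m. \<forall>lam::real. lam > 0 \<longrightarrow>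
    (V D Pol K \<mu> P \<pi> - V D Pol K \<mu> Q \<pi>)
      + (1 + lam) * (Vhat xs t Pol K \<mu> Q \<pi> - Vhat xs t Pol K \<mu> P \<pi>)
    \<le> \<gamma> * (V D Pol K \<mu> P \<pi> + (1 + lam) * Vhat xs t Pol K \<mu> P \<pi>)"
proof -
  interpret prob_space D by (rule D)
  define g where "g Q = inv_prob Pol K \<mu> Q \<pi>" for Q
  define h where "h Q x = \<bar>g Q x - g P x\<bar>" for Q x
  define X where "X Q = (\<integral>x. h Q x \<partial>D)" for Q
  define Y where "Y Q = 1 / real (t - 1) * (\<Sum>i\<in>{1..<t}. h Q (xs i))" for Q
  have int_g: "integrable D (g Q)" if "\<forall>\<pi>'\<in>Pol. 0 \<le> Q \<pi>'" for Q
    unfolding g_def using integrable_inv_prob[OF D is_dist_finite[OF dist] meas \<pi> that c \<mu>] .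
  have int_gP: "integrable D (g P)" using dist by (intro int_g) (simp add: is_dist_def)
  have int_h: "integrable D (h Q)" if "Q \<in> S Pol m" for Q
    unfolding h_def using int_g S_nonneg[OF that] int_gP by auto
  have "E_Pm Pol P m X = (\<integral>x. E_Pm Pol P m (\<lambda>Q. h Q x) \<partial>D)"
    unfolding X_def using has_bochner_integral_E_Pm[where P=P, OF int_h] by (simp add: has_bochner_integral_iff)
  also have "\<dots> \<le> (\<integral>x. \<gamma> / 2 * g P x \<partial>D)"
    using has_bochner_integral_E_Pm[where P=P, OF int_h] int_gP deviation unfolding h_def g_def
    by (intro integral_mono) (auto simp: has_bochner_integral_iff)
  finally have EX: "E_Pm Pol P m X \<le> \<gamma> / 2 * V D Pol K \<mu> P \<pi>"
    by (simp add: V_def g_def)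
  have "E_Pm Pol P m Y = 1 / real (t - 1) * (\<Sum>i\<in>{1..<t}. E_Pm Pol P m (\<lambda>Q. h Q (xs i)))"
    unfolding Y_def by (rule E_Pm_scaled_sum)
  also have "\<dots> \<le> 1 / real (t - 1) * (\<Sum>i\<in>{1..<t}. \<gamma> / 2 * g P (xs i))"
    using deviation unfolding h_def g_def by (intro mult_left_mono sum_mono) auto
  finally have EY: "E_Pm Pol P m Y \<le> \<gamma> / 2 * Vhat xs t Pol K \<mu> P \<pi>"
    by (simp add: Vhat_def g_def sum_distrib_left mult_ac)
  obtain Q where Q: "Q \<in> S Pol m" "X Q \<le> 2 * E_Pm Pol P m X" "Y Q \<le> 2 * E_Pm Pol P m Y"
    using ex_in_S_le_twice_E_Pm[OF dist, where X=X and Y=Y] by (auto simp: X_def Y_def h_def)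
  have "V D Pol K \<mu> P \<pi> - V D Pol K \<mu> Q \<pi> = (\<integral>x. g P x - g Q x \<partial>D)"
    using int_gP int_g S_nonneg[OF Q(1)] by (simp add: V_def g_def)
  also have "\<dots> \<le> X Q"
    unfolding X_def h_def using int_gP int_g S_nonneg[OF Q(1)] int_h[OF Q(1)]
    by (intro integral_mono) (auto simp: h_def)
  finally have V_le: "V D Pol K \<mu> P \<pi> - V D Pol K \<mu> Q \<pi> \<le> \<gamma> * V D Pol K \<mu> P \<pi>"
    using Q(2) EX by linarith
  have "Vhat xs t Pol K \<mu> Q \<pi> - Vhat xs t Pol K \<mu> P \<pi>
      = 1 / real (t - 1) * (\<Sum>i\<in>{1..<t}. g Q (xs i) - g P (xs i))"
    unfolding Vhat_def g_def by (simp add: sum_subtractf right_diff_distrib)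
  also have "\<dots> \<le> Y Q"
    unfolding Y_def h_def by (intro mult_left_mono sum_mono) auto
  finally have Vhat_le: "Vhat xs t Pol K \<mu> Q \<pi> - Vhat xs t Pol K \<mu> P \<pi> \<le> \<gamma> * Vhat xs t Pol K \<mu> P \<pi>"
    using Q(3) EY by linarith
  show ?thesis
  proof (intro bexI[OF _ Q(1)] allI impI)
    fix lam :: real assume "lam > 0"
    with Vhat_le have "(1 + lam) * (Vhat xs t Pol K \<mu> Q \<pi> - Vhat xs t Pol K \<mu> P \<pi>)
        \<le> (1 + lam) * (\<gamma> * Vhat xs t Pol K \<mu> P \<pi>)"
      by (intro mult_left_mono) auto
    with V_le show "(V D Pol K \<mu> P \<pi> - V D Pol K \<mu> Q \<pi>)
        + (1 + lam) * (Vhat xs t Pol K \<mu> Q \<pi> - Vhat xs t Pol K \<mu> P \<pi>)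
      \<le> \<gamma> * (V D Pol K \<mu> P \<pi> + (1 + lam) * Vhat xs t Pol K \<mu> P \<pi>)"
      by (simp add: algebra_simps)
  qed
qed

lemma mu_t_pos:
  assumes "K > 0" "N > 0" "t > 0" "0 < \<delta>" "\<delta> < 1"
  shows "0 < mu_t K N \<delta> t"
proof -
  have "1 \<le> real N" "1 \<le> real t" using assms(2,3) by simp_all
  then have "1 \<le> real N * real t" using mult_mono[of 1 "real N" 1 "real t"] by simp
  then have "1 < real N * real t / \<delta>" using assms(4,5) by (simp add: less_divide_eq)
  then have "0 < C_t N \<delta> t" by (simp add: C_t_def)
  then show ?thesis using assms(1,3) by (simp add: mu_t_def)
qed

lemma mu_t_le_half_inverse: "K > 0 \<Longrightarrow> real K * mu_t K N \<delta> t \<le> 1 / 2"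
  unfolding mu_t_def by (simp add: min_def field_simps)

theorem lemma8:
  fixes Pol :: "('x \<Rightarrow> 'a::finite) set" and D :: "'x measure"
    and \<delta> \<gamma> :: real and t :: nat and xs :: "nat \<Rightarrow> 'x"
  assumes "finite Pol" and "Pol \<noteq> {}"
    and "prob_space D"
    and "\<forall>\<pi>\<in>Pol. \<pi> \<in> D \<rightarrow>\<^sub>M count_space UNIV"
    and "0 < \<delta>" and "\<delta> < 1" and "1 \<le> t"
    and "0 < \<gamma>" and "\<gamma> \<le> 1"
  defines "K \<equiv> CARD('a)" and "N \<equiv> card Pol"
  defines "\<mu> \<equiv> mu_t K N \<delta> t"
  defines "m \<equiv> nat \<lceil>6 / (\<gamma>\<^sup>2 * \<mu>)\<rceil>"
  shows "(\<forall>x P \<pi>. is_dist Pol P \<and> \<pi> \<in> Pol \<longrightarrow>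
            E_Pm Pol P m (\<lambda>Q. \<bar>inv_prob Pol K \<mu> Q \<pi> x - inv_prob Pol K \<mu> P \<pi> x\<bar>)
              \<le> \<gamma> * inv_prob Pol K \<mu> P \<pi> x)
       \<and> (\<forall>P \<pi>. is_dist Pol P \<and> \<pi> \<in> Pol \<longrightarrow>
            (\<exists>Q\<in>S Pol m. \<forall>lam::real. lam > 0 \<longrightarrow>
               (V D Pol K \<mu> P \<pi> - V D Pol K \<mu> Q \<pi>)
                 + (1 + lam) * (Vhat xs t Pol K \<mu> Q \<pi> - Vhat xs t Pol K \<mu> P \<pi>)
               \<le> \<gamma> * (V D Pol K \<mu> P \<pi> + (1 + lam) * Vhat xs t Pol K \<mu> P \<pi>)))"
proof -
  have K: "K > 0" and N: "N > 0"
    using assms(1,2) by (simp_all add: K_def N_def card_gt_0_iff)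
  have \<mu>: "\<mu> > 0" using mu_t_pos[OF K N _ assms(5,6)] assms(7) by (simp add: \<mu>_def)
  have c: "0 \<le> 1 - real K * \<mu>" using mu_t_le_half_inverse[OF K, of N \<delta> t] by (simp add: \<mu>_def)
  have m: "real m \<ge> 6 / (\<gamma>\<^sup>2 * \<mu>)"
    unfolding m_def by linarith
  have deviation: "E_Pm Pol P m (\<lambda>Q. \<bar>inv_prob Pol K \<mu> Q \<pi> x - inv_prob Pol K \<mu> P \<pi> x\<bar>)
      \<le> \<gamma> / 2 * inv_prob Pol K \<mu> P \<pi> x" if "is_dist Pol P" for P \<pi> x
    using E_Pm_inv_prob_deviation_le[OF that c \<mu> assms(8,9) m] .
  show ?thesis
  proof (intro conjI allI impI; elim conjE)
    fix x P \<pi> assume P: "is_dist Pol P"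
    then have "0 < inv_prob Pol K \<mu> P \<pi> x"
      by (intro inv_prob_pos_le(1)[OF _ c \<mu>]) (simp add: is_dist_def)
    then have "\<gamma> / 2 * inv_prob Pol K \<mu> P \<pi> x \<le> \<gamma> * inv_prob Pol K \<mu> P \<pi> x"
      using assms(8) by simp
    with deviation[OF P] show "E_Pm Pol P m (\<lambda>Q. \<bar>inv_prob Pol K \<mu> Q \<pi> x - inv_prob Pol K \<mu> P \<pi> x\<bar>)
        \<le> \<gamma> * inv_prob Pol K \<mu> P \<pi> x"
      by (rule order_trans)
  next
    fix P \<pi> assume P: "is_dist Pol P" and \<pi>: "\<pi> \<in> Pol"
    show "\<exists>Q\<in>S Pol m. \<forall>lam::real. lam > 0 \<longrightarrow>
        (V D Pol K \<mu> P \<pi> - V D Pol K \<mu> Q \<pi>)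
          + (1 + lam) * (Vhat xs t Pol K \<mu> Q \<pi> - Vhat xs t Pol K \<mu> P \<pi>)
        \<le> \<gamma> * (V D Pol K \<mu> P \<pi> + (1 + lam) * Vhat xs t Pol K \<mu> P \<pi>)"
      by (rule ex_S_V_Vhat_deviation_le[OF assms(3,4) \<pi> P c \<mu> deviation[OF P]])
  qed
qed

end
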